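(* Let $\{A_k\}_{k\ge0}$ be a sequence of nonnegative reals with $A_0=0$ and $A_k=A_{k-1}+\sqrt{c_1^2+c_2A_{k-1}}$ for $k\ge1$, where $c_1>0$ and $c_2\ge0$. Let $K_0=\lceil\frac{c_2}{9c_1}\rceil$. Then $$A_k\ge\begin{cases}\frac{c_2}{9}\Big(k-K_0+\max\Big\{3\sqrt{\frac{c_1}{c_2}},1\Big\}\Big)^2,&\text{if }c_2>0\text{ and }k>K_0,\\ c_1k,&\text{otherwise.}\end{cases}$$ *)

theory Defs
  imports Complex_Main
begin

end

theory Submission
  imports Defs
begin

text \<open>Each step adds at least \<open>c\<^sub>1\<close>, giving the linear bound. Once \<open>A\<close> exceeds
  \<open>c\<^sub>2/9 \<cdot> x\<^sup>2\<close> with \<open>x \<ge> 1\<close>, the increment \<open>\<surd>(c\<^sub>2 A) \<ge> c\<^sub>2 x/3 \<ge> c\<^sub>2 (2x+1)/9\<close> pushes it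
  past \<open>c\<^sub>2/9 \<cdot> (x+1)\<^sup>2\<close>. The index \<open>K\<^sub>0\<close> is chosen so that the linear bound already gives
  \<open>A K\<^sub>0 \<ge> max c\<^sub>1 (c\<^sub>2/9) = c\<^sub>2/9 \<cdot> m\<^sup>2\<close> with \<open>m = max (3\<surd>(c\<^sub>1/c\<^sub>2)) 1\<close>, which starts the
  quadratic induction. Nonnegativity of \<open>A\<close> need not be assumed: it follows from \<open>A 0 = 0\<close>.\<close>

lemma sqrt_recurrence_linear_growth:
  fixes A :: "nat \<Rightarrow> real" and b c :: real
  assumes step: "\<And>j. A (Suc j) = A j + sqrt (b\<^sup>2 + c * A j)"
    and "A 0 \<ge> 0" and "b \<ge> 0" and "c \<ge> 0"
  shows "A n \<ge> A 0 + b * real n"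
proof (induction n)
  case 0
  then show ?case by simp
next
  case (Suc n)
  have "b * real n \<ge> 0"
    using \<open>b \<ge> 0\<close> by simp
  then have "A n \<ge> 0"
    using Suc.IH \<open>A 0 \<ge> 0\<close> by linarith
  then have "sqrt (b\<^sup>2 + c * A n) \<ge> sqrt (b\<^sup>2)"
    using \<open>c \<ge> 0\<close> by (intro real_sqrt_le_mono) simp
  then have "sqrt (b\<^sup>2 + c * A n) \<ge> b"
    using \<open>b \<ge> 0\<close> by simp
  then show ?case
    using Suc.IH step[of n] by (simp add: distrib_left)
qed

lemma sqrt_increment_quadratic_step:
  fixes a b c x :: real
  assumes "a \<ge> c / 9 * x\<^sup>2" and "x \<ge> 1" and "b \<ge> 0" and "c \<ge> 0"
  shows "a + sqrt (b + c * a) \<ge> c / 9 * (x + 1)\<^sup>2"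
proof -
  have "(c * x / 3)\<^sup>2 = c * (c / 9 * x\<^sup>2)"
    by (simp add: power2_eq_square)
  also have "\<dots> \<le> c * a"
    using assms(1,4) by (rule mult_left_mono)
  finally have "sqrt ((c * x / 3)\<^sup>2) \<le> sqrt (b + c * a)"
    using assms(3) by (intro real_sqrt_le_mono) simp
  then have root: "c * x / 3 \<le> sqrt (b + c * a)"
    using assms(2,4) by simp
  have "c * (2 * x + 1) \<le> c * (3 * x)"
    using assms(2,4) by (intro mult_left_mono) auto
  then have increment: "c * (2 * x + 1) / 9 \<le> c * x / 3"
    by simp
  have "c / 9 * (x + 1)\<^sup>2 = c / 9 * x\<^sup>2 + c * (2 * x + 1) / 9"
    by (simp add: power2_eq_square algebra_simps add_divide_distrib)
  then show ?thesis
    using assms(1) root increment by linarith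
qed

lemma sqrt_recurrence_quadratic_growth:
  fixes A :: "nat \<Rightarrow> real" and b c m :: real
  assumes step: "\<And>j. A (Suc j) = A j + sqrt (b\<^sup>2 + c * A j)"
    and start: "A K \<ge> c / 9 * m\<^sup>2" and "m \<ge> 1" and "c \<ge> 0"
  shows "A (K + i) \<ge> c / 9 * (real i + m)\<^sup>2"
proof (induction i)
  case 0
  then show ?case using start by simp
next
  case (Suc i)
  have "A (K + i) + sqrt (b\<^sup>2 + c * A (K + i)) \<ge> c / 9 * (real i + m + 1)\<^sup>2"
    using Suc.IH \<open>m \<ge> 1\<close> \<open>c \<ge> 0\<close> by (intro sqrt_increment_quadratic_step) simp_all
  then show ?case
    using step[of "K + i"] by (simp add: add_ac)
qed

lemma max_sqrt_ratio_square:
  fixes c1 c2 :: real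
  assumes "c1 > 0" and "c2 > 0"
  shows "c2 / 9 * (max (3 * sqrt (c1 / c2)) 1)\<^sup>2 = max c1 (c2 / 9)"
proof -
  define s where "s = 3 * sqrt (c1 / c2)"
  have "s \<ge> 0" and square: "s\<^sup>2 = 9 * (c1 / c2)"
    using assms by (simp_all add: s_def power_mult_distrib)
  then have "s \<ge> 1 \<longleftrightarrow> 9 * (c1 / c2) \<ge> 1"
    using power2_ge_1_iff[of s] by auto
  also have "\<dots> \<longleftrightarrow> c1 \<ge> c2 / 9"
    using assms by (simp add: field_simps)
  finally have threshold: "s \<ge> 1 \<longleftrightarrow> c1 \<ge> c2 / 9" .
  have "c2 / 9 * (max s 1)\<^sup>2 = max c1 (c2 / 9)"
  proof (cases "s \<ge> 1")
    case True
    then have "max s 1 = s" and "max c1 (c2 / 9) = c1"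
      using threshold by (simp_all add: max_absorb1)
    then show ?thesis
      using square assms by simp
  next
    case False
    then have "max s 1 = 1" and "max c1 (c2 / 9) = c2 / 9"
      using threshold by (simp_all add: max_absorb2)
    then show ?thesis
      by simp
  qed
  then show ?thesis
    unfolding s_def .
qed

theorem lemma6:
  fixes A :: "nat \<Rightarrow> real" and c1 c2 :: real and k :: nat
  assumes nonneg: "\<And>j. A j \<ge> 0"
    and A0: "A 0 = 0"
    and rec: "\<And>j. j \<ge> 1 \<Longrightarrow> A j = A (j - 1) + sqrt (c1^2 + c2 * A (j - 1))"
    and c1: "c1 > 0" and c2: "c2 \<ge> 0"
  defines "K0 \<equiv> \<lceil>c2 / (9 * c1)\<rceil>"
  shows "A k \<ge> (if c2 > 0 \<and> int k > K0
                 then c2 / 9 * (real k - real_of_int K0 + max (3 * sqrt (c1 / c2)) 1)^2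
                 else c1 * real k)"
proof -
  have step: "A (Suc j) = A j + sqrt (c1\<^sup>2 + c2 * A j)" for j
    using rec[of "Suc j"] by simp
  have linear: "A n \<ge> c1 * real n" for n
    using sqrt_recurrence_linear_growth[of A c1 c2, OF step] A0 c1 c2 by simp
  show ?thesis
  proof (cases "c2 > 0 \<and> int k > K0")
    case False
    then show ?thesis using linear[of k] by (simp only: if_False)
  next
    case True
    define m where "m = max (3 * sqrt (c1 / c2)) 1"
    define K where "K = nat K0"
    have "K0 \<ge> 1"
      using True c1 unfolding K0_def by simp
    then have K: "real K = real_of_int K0"
      unfolding K_def by simp
    then have "real K \<ge> 1" and "real K \<ge> c2 / (9 * c1)"
      using \<open>K0 \<ge> 1\<close> unfolding K0_def by auto
    then have "c1 * real K \<ge> max c1 (c2 / 9)"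
      using c1 by (auto simp: field_simps)
    then have "A K \<ge> c2 / 9 * m\<^sup>2"
      using linear[of K] max_sqrt_ratio_square[OF c1] True unfolding m_def by simp
    then have "A (K + (k - K)) \<ge> c2 / 9 * (real (k - K) + m)\<^sup>2"
      using c2 unfolding m_def
      by (intro sqrt_recurrence_quadratic_growth[of A c1 c2, OF step]) auto
    moreover have "K \<le> k"
      using True unfolding K_def by auto
    ultimately show ?thesis
      using True K unfolding m_def by simp
  qed
qed

end
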